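(* Let $\pi_\cap:\mathcal{Y}_{Q(\mathbf{e}_d)}(\mathbb{R})\to\mathcal{X}_{Q(\mathbf{e}_d)}(\mathbb{R})$ be $\pi_\cap(L,P,\mathbf{v})=(L\cap P,\mathbf{v})$. Then $(\pi_\cap)_*\mu_{\mathcal{Y}}=\mu_{\mathcal{X}}$.
   Context: $d\ge4$, $Q(\mathbf{x})=\mathbf{x}^tM\mathbf{x}$ with $M\in M_d(\mathbb{Z})$ symmetric, $\det M\ne0$, $Q(\mathbf{e}_d)>0$, $\{h\in\mathrm{SO}_Q(\mathbb{R}):h\mathbf{e}_d=\mathbf{e}_d\}$ compact, $\mathrm{SO}_Q(R)=\{h\in\mathrm{SL}_d(R):h^tMh=M\}$. $\theta(g)=(g^t)^{-1}$, $\tau(g)=\theta(g)\mathbf{e}_d$, $\mathcal{H}_s(\mathbb{R})=\{Q=s\}$. $\mathrm{ASL}_{d-1}$: matrices $\begin{pmatrix}m&\mathbf{w}\\ \mathbf{0}&1\end{pmatrix}$, $m\in\mathrm{SL}_{d-1}$; $U=\{\begin{pmatrix}I_{d-1}&\mathbf{w}\\ \mathbf{0}&1\end{pmatrix}\}$. $\mathcal{Y}(\mathbb{R})$: triples $(L,P,\mathbf{v})$, $L$ unimodular lattice in $\mathbb{R}^d$, $P$ hyperplane with $L\cap P$ a lattice in $P$, $\mathbf{v}\perp P$, $\|\mathbf{v}\|$ equal to the covolume of $L\cap P$ in $P$; identified with $\mathrm{SL}_d(\mathbb{R})/\mathrm{ASL}_{d-1}(\mathbb{Z})$ via $g\mapsto(g\mathbb{Z}^d,\mathrm{Span}\{g\mathbf{e}_1,..,g\mathbf{e}_{d-1}\},\tau(g))$.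 $\mathcal{X}(\mathbb{R})$: pairs $(\Lambda,\mathbf{v})$, $\Lambda$ rank $d-1$ discrete subgroup, $\mathbf{v}\perp\Lambda$, $\|\mathbf{v}\|=\mathrm{covol}(\Lambda)$; identified with $\mathrm{SL}_d(\mathbb{R})/\mathrm{ASL}_{d-1}(\mathbb{Z})U$ via $g\mapsto(\mathrm{Span}_\mathbb{Z}\{g\mathbf{e}_1,..,g\mathbf{e}_{d-1}\},\tau(g))$. $\mathcal{Y}_s(\mathbb{R}),\mathcal{X}_s(\mathbb{R})$ are the subsets with $Q(\mathbf{v})=s$. Measures: $m_{\mathrm{SO}_Q(\mathbb{R})}$ Haar with $\int\varphi=\int_{\mathrm{SO}_Q(\mathbb{R})/\mathrm{SO}_Q(\mathbb{Z})}\sum_\gamma\varphi(x\gamma)d\mu$ ($\mu$ invariant probability), $\mu_{\mathcal{H}}$ its pushforward to $\mathcal{H}_{Q(\mathbf{e}_d)}(\mathbb{R})$ under $\rho\mapsto\rho^{-1}\mathbf{e}_d$; $m_{Y_{d-1}}$ the invariant probability on $\mathrm{ASL}_{d-1}(\mathbb{R})/\mathrm{ASL}_{d-1}(\mathbb{Z})$, $m_{X_{d-1}}$ its pushforward to $\mathrm{ASL}_{d-1}(\mathbb{R})/\mathrm{ASL}_{d-1}(\mathbb{Z})U$; with $g_{\mathbf{v}}\in\mathrm{SL}_d(\mathbb{R})$ any matrix satisfying $\tau(g_{\mathbf{v}})=\mathbf{v}$, $\mu_{\mathcal{Y}}(f)=\int\int f(g_{\mathbf{v}}x)\,dm_{Y_{d-1}}(x)\,d\mu_{\mathcal{H}}(\mathbf{v})$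 and $\mu_{\mathcal{X}}(f)=\int\int f(g_{\mathbf{v}}x)\,dm_{X_{d-1}}(x)\,d\mu_{\mathcal{H}}(\mathbf{v})$ (in the coset identifications). *)

theory Defs
  imports "HOL-Analysis.Analysis" "HOL-Probability.Probability_Measure"
begin

text \<open>Vectors in R^d are (real, 'd) vec, matrices ((real, 'd) vec, 'd) vec; the index type is linearly
ordered and its largest element plays the role of the last coordinate d.\<close>


definition lastI :: "('d::{finite,linorder})" where
  "lastI = Max UNIV"

definition ed :: "(real, 'd::{finite,linorder}) vec" where
  "ed = axis lastI 1"

definition QF :: "((real, 'd::finite) vec, 'd) vec \<Rightarrow> (real, 'd) vec \<Rightarrow> real" where
  "QF M x = x \<bullet> (M *v x)"

definition int_mat :: "((real, 'd::finite) vec, 'd) vec \<Rightarrow> bool" where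
  "int_mat g \<longleftrightarrow> (\<forall>i j. g$i$j \<in> \<int>)"

definition SLd :: "(((real, 'd::finite) vec, 'd) vec) set" where
  "SLd = {g. det g = 1}"

definition SO_R :: "((real, 'd::finite) vec, 'd) vec \<Rightarrow> (((real, 'd) vec, 'd) vec) set" where
  "SO_R M = {h. det h = 1 \<and> transpose h ** M ** h = M}"

definition SO_Z :: "((real, 'd::finite) vec, 'd) vec \<Rightarrow> (((real, 'd) vec, 'd) vec) set" where
  "SO_Z M = {h \<in> SO_R M. int_mat h}"

definition theta :: "((real, 'd::finite) vec, 'd) vec \<Rightarrow> ((real, 'd) vec, 'd) vec" where
  "theta g = transpose (matrix_inv g)"

definition tau :: "((real, 'd::{finite,linorder}) vec, 'd) vec \<Rightarrow> (real, 'd) vec" where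
  "tau g = theta g *v ed"

text \<open>ASL_{d-1}(R), ASL_{d-1}(Z) and U, embedded in SL_d.\<close>
definition ASL_R :: "(((real, 'd::{finite,linorder}) vec, 'd) vec) set" where
  "ASL_R = {g. det g = 1 \<and> (\<forall>j. g$lastI$j = (if j = lastI then 1 else 0))}"

definition ASL_Z :: "(((real, 'd::{finite,linorder}) vec, 'd) vec) set" where
  "ASL_Z = {g \<in> ASL_R. int_mat g}"

definition U_grp :: "(((real, 'd::{finite,linorder}) vec, 'd) vec) set" where
  "U_grp = {g \<in> ASL_R. \<forall>i j. i \<noteq> lastI \<and> j \<noteq> lastI \<longrightarrow> g$i$j = (if i = j then 1 else 0)}"

definition lmul :: "((real, 'd::finite) vec, 'd) vec \<Rightarrow> (((real, 'd) vec, 'd) vec) set \<Rightarrow> (((real, 'd) vec, 'd) vec) set" where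
  "lmul g C = (\<lambda>y. g ** y) ` C"

definition setmul :: "(((real, 'd::finite) vec, 'd) vec) set \<Rightarrow> (((real, 'd) vec, 'd) vec) set \<Rightarrow> (((real, 'd) vec, 'd) vec) set" where
  "setmul A B = {a ** b | a b. a \<in> A \<and> b \<in> B}"

definition quot :: "(((real, 'd::finite) vec, 'd) vec) set \<Rightarrow> (((real, 'd) vec, 'd) vec) set \<Rightarrow> (((real, 'd) vec, 'd) vec) set set" where
  "quot G H = {lmul g H | g. g \<in> G}"

text \<open>Quotient measurable structure on G/H: a set of cosets is measurable iff its
preimage under the projection G \<rightarrow> G/H (i.e. its union) is Borel.\<close>
definition quot_measure :: "(((real, 'd::finite) vec, 'd) vec) set \<Rightarrow> (((real, 'd) vec, 'd) vec) set \<Rightarrow> (((real, 'd) vec, 'd) vec) set measure" where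
  "quot_measure G H = sigma (quot G H) {A. A \<subseteq> quot G H \<and> \<Union>A \<in> sets borel}"

definition inv_prob_quot :: "(((real, 'd::finite) vec, 'd) vec) set \<Rightarrow> (((real, 'd) vec, 'd) vec) set \<Rightarrow> (((real, 'd) vec, 'd) vec) set measure \<Rightarrow> bool" where
  "inv_prob_quot G H \<mu> \<longleftrightarrow> prob_space \<mu> \<and> sets \<mu> = sets (quot_measure G H) \<and>
     (\<forall>h\<in>G. distr \<mu> (quot_measure G H) (lmul h) = \<mu>)"

text \<open>m_{Y_{d-1}}: the invariant probability on ASL_{d-1}(R)/ASL_{d-1}(Z)
(the fallback branch is only a totalisation; such a measure exists).\<close>
definition m_Yd :: "(((real, 'd::{finite,linorder}) vec, 'd) vec) set measure" where
  "m_Yd = (if \<exists>\<mu> :: (((real, 'd) vec, 'd) vec) set measure. inv_prob_quot ASL_R ASL_Z \<mu> then SOME \<mu>. inv_prob_quot ASL_R ASL_Z \<mu>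
           else null_measure (quot_measure ASL_R ASL_Z))"

definition m_Xd :: "(((real, 'd::{finite,linorder}) vec, 'd) vec) set measure" where
  "m_Xd = distr m_Yd (quot_measure ASL_R (setmul ASL_Z U_grp)) (\<lambda>C. setmul C U_grp)"

text \<open>Haar measure on SO_Q(R), normalised by the unfolding formula with respect to the
invariant probability on SO_Q(R)/SO_Q(Z); note that for x in G,
sum over gamma of phi(x gamma) is the sum of phi over the coset x SO_Q(Z).\<close>
definition haar_SO :: "((real, 'd::finite) vec, 'd) vec \<Rightarrow> (((real, 'd) vec, 'd) vec) measure \<Rightarrow> bool" where
  "haar_SO M m \<longleftrightarrow> sets m = sets borel \<and> emeasure m (UNIV - SO_R M) = 0 \<and>
     (\<forall>h\<in>SO_R M. distr m borel (\<lambda>g. h ** g) = m) \<and>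
     (\<exists>\<nu>. inv_prob_quot (SO_R M) (SO_Z M) \<nu> \<and>
        (\<forall>\<phi> \<in> borel_measurable borel.
           (\<integral>\<^sup>+ g. \<phi> g \<partial>m) = (\<integral>\<^sup>+ C. (\<integral>\<^sup>+ y. \<phi> y \<partial>count_space C) \<partial>\<nu>)))"

definition mu_H :: "((real, 'd::{finite,linorder}) vec, 'd) vec \<Rightarrow> ((real, 'd) vec) measure" where
  "mu_H M = distr (SOME m. haar_SO M m) borel (\<lambda>\<rho>. matrix_inv \<rho> *v ed)"

definition gv :: "(real, 'd::{finite,linorder}) vec \<Rightarrow> ((real, 'd) vec, 'd) vec" where
  "gv v = (if \<exists>g. det g = 1 \<and> tau g = v then SOME g. det g = 1 \<and> tau g = v else mat 1)"

definition Zd :: "((real, 'd::finite) vec) set" where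
  "Zd = {z. \<forall>i. z$i \<in> \<int>}"

text \<open>The identifications SL_d(R)/ASL_{d-1}(Z) \<rightarrow> Y(R), SL_d(R)/ASL_{d-1}(Z)U \<rightarrow> X(R),
evaluated at a representative g.\<close>
definition Y_of :: "((real, 'd::{finite,linorder}) vec, 'd) vec \<Rightarrow> ((real, 'd) vec) set \<times> ((real, 'd) vec) set \<times> (real, 'd) vec" where
  "Y_of g = ((\<lambda>z. g *v z) ` Zd, span {g *v axis i 1 | i. i \<noteq> lastI}, tau g)"

definition int_span_first :: "((real, 'd::{finite,linorder}) vec, 'd) vec \<Rightarrow> ((real, 'd) vec) set" where
  "int_span_first g = {x. \<exists>c. (\<forall>i. c i \<in> \<int>) \<and>
       x = (\<Sum>i\<in>{i. i \<noteq> lastI}. c i *\<^sub>R (g *v axis i 1))}"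

definition X_of :: "((real, 'd::{finite,linorder}) vec, 'd) vec \<Rightarrow> ((real, 'd) vec) set \<times> (real, 'd) vec" where
  "X_of g = (int_span_first g, tau g)"

definition rep :: "'a set \<Rightarrow> 'a" where
  "rep C = (SOME x. x \<in> C)"

text \<open>mu_Y and mu_X as functionals on nonnegative functions on Y(R), X(R).\<close>
definition mu_Y :: "((real, 'd::{finite,linorder}) vec, 'd) vec \<Rightarrow> (((real, 'd) vec) set \<times> ((real, 'd) vec) set \<times> (real, 'd) vec \<Rightarrow> ennreal) \<Rightarrow> ennreal" where
  "mu_Y M f = (\<integral>\<^sup>+ v. (\<integral>\<^sup>+ C. f (Y_of (gv v ** rep C)) \<partial>m_Yd) \<partial>mu_H M)"

definition mu_X :: "((real, 'd::{finite,linorder}) vec, 'd) vec \<Rightarrow> (((real, 'd) vec) set \<times> (real, 'd) vec \<Rightarrow> ennreal) \<Rightarrow> ennreal" where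
  "mu_X M f = (\<integral>\<^sup>+ v. (\<integral>\<^sup>+ C. f (X_of (gv v ** rep C)) \<partial>m_Xd) \<partial>mu_H M)"

definition pi_cap :: "((real, 'd) vec) set \<times> ((real, 'd) vec) set \<times> (real, 'd) vec \<Rightarrow> ((real, 'd) vec) set \<times> (real, 'd) vec" where
  "pi_cap y = (case y of (L, P, v) \<Rightarrow> (L \<inter> P, v))"

end

theory Submission
  imports Defs
begin

text \<open>For invertible \<open>g\<close>, the lattice \<open>g \<int>\<^sup>d\<close> meets the hyperplane spanned by the first
\<open>d - 1\<close> columns of \<open>g\<close> exactly in \<open>g (\<int>\<^sup>d\<^sup>-\<^sup>1 \<times> 0)\<close>, so \<open>pi_cap (Y_of g) = X_of g\<close>.
Moreover \<open>X_of g\<close> only depends on the coset \<open>g ASL_Z U\<close>, since this group maps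
\<open>\<int>\<^sup>d\<^sup>-\<^sup>1 \<times> 0\<close> onto itself and fixes \<open>tau\<close>. Hence, for each \<open>v\<close>, the integrand of \<open>mu_Y\<close>
on \<open>ASL_R / ASL_Z\<close> is the pull-back of the integrand of \<open>mu_X\<close> along the projection
\<open>C \<mapsto> C U\<close>, and \<open>m_Xd\<close> is by definition the push-forward of \<open>m_Yd\<close> under it.\<close>

type_synonym 'd sq_matrix = "((real, 'd) vec, 'd) vec"

section \<open>Inverse and integral matrices\<close>

lemma matrix_inv_right: "invertible A \<Longrightarrow> A ** matrix_inv A = mat 1"
  and matrix_inv_left: "invertible A \<Longrightarrow> matrix_inv A ** A = mat 1"
  unfolding invertible_def matrix_inv_def by (metis (mono_tags, lifting) someI_ex)+

lemma matrix_inv_eqI: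
  fixes A :: "'a::field^'n^'n" assumes "A ** B = mat 1" shows "matrix_inv A = B"
proof -
  have "invertible A" using assms invertible_right_inverse by blast
  then have "matrix_inv A = matrix_inv A ** (A ** B)" using assms by simp
  also have "\<dots> = B" by (simp add: matrix_mul_assoc matrix_inv_left \<open>invertible A\<close>)
  finally show ?thesis .
qed

lemma invertible_matrix_inv: "invertible A \<Longrightarrow> invertible (matrix_inv A)"
  using matrix_inv_left matrix_inv_right invertible_def by blast

lemma matrix_inv_matrix_inv:
  fixes A :: "'a::field^'n^'n" shows "invertible A \<Longrightarrow> matrix_inv (matrix_inv A) = A"
  by (intro matrix_inv_eqI matrix_inv_left)

lemma matrix_inv_mult:
  fixes A B :: "'a::field^'n^'n" assumes "invertible A" "invertible B"
  shows "matrix_inv (A ** B) = matrix_inv B ** matrix_inv A"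
proof (rule matrix_inv_eqI)
  have "A ** B ** (matrix_inv B ** matrix_inv A) = A ** (B ** matrix_inv B) ** matrix_inv A"
    by (simp add: matrix_mul_assoc)
  then show "A ** B ** (matrix_inv B ** matrix_inv A) = mat 1"
    by (simp add: assms matrix_inv_right)
qed

lemma det_matrix_inv:
  fixes A :: "'a::field^'n^'n" assumes "invertible A" shows "det (matrix_inv A) = inverse (det A)"
proof -
  have "det A * det (matrix_inv A) = 1"
    by (metis assms det_I det_mul matrix_inv_right)
  moreover have "det A \<noteq> 0" using assms invertible_det_nz by blast
  ultimately show ?thesis by (simp add: field_simps)
qed

lemma matrix_vector_mult_axis_component:
  "((A :: 'a::semiring_1^'n^'m) *v axis j 1) $ i = A $ i $ j"
  by (simp add: matrix_vector_mult_def axis_def if_distrib cong: if_cong)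

lemma int_mat_iff_Zd: "int_mat (A :: 'd::finite sq_matrix) \<longleftrightarrow> (\<forall>z\<in>Zd. A *v z \<in> Zd)"
proof
  assume "int_mat A"
  then show "\<forall>z\<in>Zd. A *v z \<in> Zd"
    unfolding int_mat_def Zd_def by (auto simp: matrix_vector_mult_def intro!: Ints_sum Ints_mult)
next
  assume "\<forall>z\<in>Zd. A *v z \<in> Zd"
  moreover have "axis j 1 \<in> Zd" for j :: 'd
    unfolding Zd_def by (simp add: axis_def)
  ultimately show "int_mat A"
    unfolding int_mat_def Zd_def by (metis (mono_tags) mem_Collect_eq matrix_vector_mult_axis_component)
qed

lemma int_mat_det: "int_mat A \<Longrightarrow> det A \<in> \<int>"
  unfolding det_def int_mat_def by (intro Ints_sum Ints_mult Ints_prod) auto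

lemma int_mat_matrix_inv:
  fixes A :: "'d::finite sq_matrix" assumes "det A = 1" "int_mat A"
  shows "int_mat (matrix_inv A)"
  unfolding int_mat_iff_Zd
proof
  fix z :: "(real, 'd) vec" assume z: "z \<in> Zd"
  have "invertible A" using assms(1) by (simp add: invertible_det_nz)
  then have "A *v (matrix_inv A *v z) = z"
    by (simp add: matrix_vector_mul_assoc matrix_inv_right)
  then have "matrix_inv A *v z = (\<chi> k. det (\<chi> i j. if j = k then z$i else A$i$j))"
    using cramer[of A] assms(1) by simp
  moreover have "int_mat (\<chi> i j. if j = k then z$i else A$i$j)" for k
    using z assms(2) unfolding int_mat_def Zd_def by auto
  ultimately show "matrix_inv A *v z \<in> Zd"
    unfolding Zd_def by (simp add: int_mat_det)
qed

section \<open>Matrix groups and their cosets\<close>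

definition matrix_subgroup :: "'d::finite sq_matrix set \<Rightarrow> bool" where
  "matrix_subgroup H \<longleftrightarrow> mat 1 \<in> H \<and> (\<forall>a\<in>H. \<forall>b\<in>H. a ** b \<in> H) \<and>
     (\<forall>a\<in>H. invertible a \<and> matrix_inv a \<in> H)"

lemma matrix_subgroupI:
  assumes "mat 1 \<in> H" "\<And>a b. a \<in> H \<Longrightarrow> b \<in> H \<Longrightarrow> a ** b \<in> H"
    and "\<And>a. a \<in> H \<Longrightarrow> invertible a" "\<And>a. a \<in> H \<Longrightarrow> matrix_inv a \<in> H"
  shows "matrix_subgroup H"
  using assms unfolding matrix_subgroup_def by blast

lemma matrix_subgroupD:
  assumes "matrix_subgroup H"
  shows "mat 1 \<in> H" "a \<in> H \<Longrightarrow> b \<in> H \<Longrightarrow> a ** b \<in> H"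
    and "a \<in> H \<Longrightarrow> invertible a" "a \<in> H \<Longrightarrow> matrix_inv a \<in> H"
  using assms unfolding matrix_subgroup_def by blast+

lemma lmul_mult: "lmul (x ** h) H = lmul x (lmul h H)"
  unfolding lmul_def image_image by (simp add: matrix_mul_assoc)

lemma mem_lmul_self: "mat 1 \<in> H \<Longrightarrow> x \<in> lmul x H"
  unfolding lmul_def by (metis image_eqI matrix_mul_rid)

lemma lmul_matrix_subgroup:
  assumes H: "matrix_subgroup H" and h: "h \<in> H"
  shows "lmul h H = H"
proof
  show "lmul h H \<subseteq> H"
    unfolding lmul_def using matrix_subgroupD(2)[OF H h] by blast
  show "H \<subseteq> lmul h H"
  proof
    fix k assume k: "k \<in> H"
    have "k = h ** (matrix_inv h ** k)"
      using matrix_subgroupD(3)[OF H h] by (simp add: matrix_mul_assoc matrix_inv_right)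
    then show "k \<in> lmul h H"
      unfolding lmul_def using matrix_subgroupD(2,4)[OF H] h k by blast
  qed
qed

lemma setmul_lmul: "setmul (lmul x A) B = lmul x (setmul A B)"
proof -
  have "setmul (lmul x A) B = {(x ** a) ** b | a b. a \<in> A \<and> b \<in> B}"
    unfolding setmul_def lmul_def by blast
  also have "\<dots> = lmul x (setmul A B)"
    unfolding setmul_def lmul_def by (force simp: matrix_mul_assoc)
  finally show ?thesis .
qed

lemma matrix_subgroup_setmul:
  fixes A N :: "'d::finite sq_matrix set"
  assumes A: "matrix_subgroup A" and N: "matrix_subgroup N"
    and normal: "\<And>a n. a \<in> A \<Longrightarrow> n \<in> N \<Longrightarrow> matrix_inv a ** n ** a \<in> N"
  shows "matrix_subgroup (setmul A N)"
proof -
  note A' = matrix_subgroupD[OF A] and N' = matrix_subgroupD[OF N]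
  show ?thesis
  proof (rule matrix_subgroupI)
    have "mat 1 = mat 1 ** (mat 1 :: 'd sq_matrix)" by simp
    then show "mat 1 \<in> setmul A N"
      unfolding setmul_def using A'(1) N'(1) by blast
    fix g h assume "g \<in> setmul A N" "h \<in> setmul A N"
    then obtain a n a' n' where g: "g = a ** n" "a \<in> A" "n \<in> N"
      and h: "h = a' ** n'" "a' \<in> A" "n' \<in> N"
      unfolding setmul_def by blast
    have "(a ** a') ** ((matrix_inv a' ** n ** a') ** n') = a ** (a' ** matrix_inv a') ** n ** (a' ** n')"
      by (simp add: matrix_mul_assoc)
    also have "\<dots> = g ** h"
      using A'(3)[OF h(2)] by (simp add: g(1) h(1) matrix_inv_right)
    finally have "g ** h = (a ** a') ** ((matrix_inv a' ** n ** a') ** n')" ..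
    then show "g ** h \<in> setmul A N"
      unfolding setmul_def using A'(2) N'(2) normal g h by blast
  next
    fix g assume "g \<in> setmul A N"
    then obtain a n where g: "g = a ** n" "a \<in> A" "n \<in> N"
      unfolding setmul_def by blast
    have ia: "invertible a" "invertible (matrix_inv a)" "invertible n"
      using A'(3,4) N'(3) g invertible_matrix_inv by blast+
    then show "invertible g" using g(1) invertible_mult by blast
    have "matrix_inv a ** (matrix_inv (matrix_inv a) ** matrix_inv n ** matrix_inv a)
        = (matrix_inv a ** a) ** matrix_inv n ** matrix_inv a"
      using ia by (simp add: matrix_inv_matrix_inv matrix_mul_assoc)
    also have "\<dots> = matrix_inv g"
      using ia by (simp add: g(1) matrix_inv_left matrix_inv_mult)
    finally have "matrix_inv g = matrix_inv a ** (matrix_inv (matrix_inv a) ** matrix_inv n ** matrix_inv a)" ..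
    then show "matrix_inv g \<in> setmul A N"
      unfolding setmul_def using A'(4) N'(4) normal g by blast
  qed
qed

lemma image_eq_of_matrix_subgroup:
  assumes H: "matrix_subgroup H" and h: "h \<in> H"
    and maps_into: "\<And>k. k \<in> H \<Longrightarrow> (\<lambda>z. k *v z) ` S \<subseteq> S"
  shows "(\<lambda>z. h *v z) ` S = S"
proof
  show "(\<lambda>z. h *v z) ` S \<subseteq> S" using maps_into h .
  show "S \<subseteq> (\<lambda>z. h *v z) ` S"
  proof
    fix z assume "z \<in> S"
    then have "matrix_inv h *v z \<in> S"
      using maps_into matrix_subgroupD(4)[OF H h] by blast
    moreover have "z = h *v (matrix_inv h *v z)"
      using matrix_subgroupD(3)[OF H h] by (simp add: matrix_vector_mul_assoc matrix_inv_right)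
    ultimately show "z \<in> (\<lambda>z. h *v z) ` S" by blast
  qed
qed

definition preserves_last_coord :: "'d::{finite,linorder} sq_matrix \<Rightarrow> bool" where
  "preserves_last_coord g \<longleftrightarrow> (\<forall>x. (g *v x) $ lastI = x $ lastI)"

lemma preserves_last_coord_iff_last_row:
  fixes g :: "'d::{finite,linorder} sq_matrix"
  shows "preserves_last_coord g \<longleftrightarrow> (\<forall>j. g $ lastI $ j = (if j = lastI then 1 else 0))"
proof
  assume "preserves_last_coord g"
  then have "(g *v axis j 1) $ lastI = axis j 1 $ lastI" for j
    unfolding preserves_last_coord_def by blast
  then show "\<forall>j. g $ lastI $ j = (if j = lastI then 1 else 0)"
    unfolding matrix_vector_mult_axis_component by (simp add: axis_def)
next
  assume "\<forall>j. g $ lastI $ j = (if j = lastI then 1 else 0)"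
  then have "g $ lastI $ j * x $ j = (if j = lastI then x $ j else 0)" for j x
    by simp
  then show "preserves_last_coord g"
    unfolding preserves_last_coord_def by (simp add: matrix_vector_mult_def)
qed

lemma ASL_R_iff:
  fixes g :: "'d::{finite,linorder} sq_matrix"
  shows "g \<in> ASL_R \<longleftrightarrow> det g = 1 \<and> preserves_last_coord g"
  unfolding ASL_R_def preserves_last_coord_iff_last_row by simp

lemma block_identity_iff_fixes_hyperplane:
  fixes g :: "'d::{finite,linorder} sq_matrix"
  assumes last: "preserves_last_coord g"
  shows "(\<forall>i j. i \<noteq> lastI \<and> j \<noteq> lastI \<longrightarrow> g $ i $ j = (if i = j then 1 else 0))
    \<longleftrightarrow> (\<forall>x. x $ lastI = 0 \<longrightarrow> g *v x = x)"
proof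
  assume block: "\<forall>i j. i \<noteq> lastI \<and> j \<noteq> lastI \<longrightarrow> g $ i $ j = (if i = j then 1 else 0)"
  show "\<forall>x. x $ lastI = 0 \<longrightarrow> g *v x = x"
  proof (intro allI impI)
    fix x :: "(real, 'd) vec" assume x: "x $ lastI = 0"
    have "(g *v x) $ i = x $ i" if i: "i \<noteq> lastI" for i
    proof -
      have "g $ i $ j * x $ j = (if j = i then x $ j else 0)" for j
        using block x i by (cases "j = lastI") simp_all
      then show ?thesis by (simp add: matrix_vector_mult_def)
    qed
    moreover have "(g *v x) $ lastI = x $ lastI"
      using last by (simp add: preserves_last_coord_def)
    ultimately show "g *v x = x" by (metis vec_eq_iff)
  qed
next
  assume fixes_hyperplane: "\<forall>x. x $ lastI = 0 \<longrightarrow> g *v x = x"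
  show "\<forall>i j. i \<noteq> lastI \<and> j \<noteq> lastI \<longrightarrow> g $ i $ j = (if i = j then 1 else 0)"
  proof (intro allI impI)
    fix i j :: 'd assume "i \<noteq> lastI \<and> j \<noteq> lastI"
    then have "axis j 1 $ lastI = (0::real)"
      by (simp add: axis_def) metis
    then have "g *v axis j 1 = axis j 1"
      using fixes_hyperplane by blast
    then have "g $ i $ j = axis j 1 $ i"
      by (metis matrix_vector_mult_axis_component)
    then show "g $ i $ j = (if i = j then 1 else 0)"
      by (simp add: axis_def)
  qed
qed

lemma U_grp_iff:
  fixes g :: "'d::{finite,linorder} sq_matrix"
  shows "g \<in> U_grp \<longleftrightarrow> g \<in> ASL_R \<and> (\<forall>x. x $ lastI = 0 \<longrightarrow> g *v x = x)"
  unfolding U_grp_def using block_identity_iff_fixes_hyperplane ASL_R_iff by blast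

lemma ASL_Z_iff: "g \<in> ASL_Z \<longleftrightarrow> g \<in> ASL_R \<and> int_mat g"
  unfolding ASL_Z_def by simp

lemma invertible_ASL_R: "g \<in> ASL_R \<Longrightarrow> invertible g"
  by (simp add: ASL_R_iff invertible_det_nz)

lemma matrix_subgroup_ASL_R: "matrix_subgroup ASL_R"
proof (rule matrix_subgroupI)
  show "mat 1 \<in> ASL_R"
    by (simp add: ASL_R_iff preserves_last_coord_def)
  show "a ** b \<in> ASL_R" if "a \<in> ASL_R" "b \<in> ASL_R" for a b
    using that by (simp add: ASL_R_iff det_mul preserves_last_coord_def flip: matrix_vector_mul_assoc)
  show "invertible a" if "a \<in> ASL_R" for a
    using that by (rule invertible_ASL_R)
  show "matrix_inv a \<in> ASL_R" if "a \<in> ASL_R" for a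
  proof -
    have "(matrix_inv a *v x) $ lastI = x $ lastI" for x
      using that invertible_ASL_R[OF that]
      by (metis ASL_R_iff matrix_inv_right matrix_vector_mul_assoc matrix_vector_mul_lid
          preserves_last_coord_def)
    then show ?thesis
      using that by (simp add: ASL_R_iff det_matrix_inv invertible_ASL_R preserves_last_coord_def)
  qed
qed

lemma matrix_subgroup_ASL_Z: "matrix_subgroup ASL_Z"
proof (rule matrix_subgroupI)
  note R = matrix_subgroupD[OF matrix_subgroup_ASL_R]
  show "mat 1 \<in> ASL_Z"
    using R(1) by (simp add: ASL_Z_iff int_mat_def mat_def)
  show "a ** b \<in> ASL_Z" if "a \<in> ASL_Z" "b \<in> ASL_Z" for a b
    using that R(2) by (auto simp: ASL_Z_iff int_mat_iff_Zd simp flip: matrix_vector_mul_assoc)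
  show "invertible a" if "a \<in> ASL_Z" for a
    using that by (simp add: ASL_Z_iff invertible_ASL_R)
  show "matrix_inv a \<in> ASL_Z" if "a \<in> ASL_Z" for a
    using that R(4)[of a] int_mat_matrix_inv[of a] by (simp add: ASL_Z_iff ASL_R_iff)
qed

lemma matrix_subgroup_U_grp: "matrix_subgroup U_grp"
proof (rule matrix_subgroupI)
  note R = matrix_subgroupD[OF matrix_subgroup_ASL_R]
  show "mat 1 \<in> U_grp"
    using R(1) by (simp add: U_grp_iff)
  show "a ** b \<in> U_grp" if "a \<in> U_grp" "b \<in> U_grp" for a b
    using that R(2)[of a b] by (simp add: U_grp_iff flip: matrix_vector_mul_assoc)
  show "invertible a" if "a \<in> U_grp" for a
    using that by (simp add: U_grp_iff invertible_ASL_R)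
  show "matrix_inv a \<in> U_grp" if "a \<in> U_grp" for a
  proof -
    have a: "a \<in> ASL_R" "\<And>x. x $ lastI = 0 \<Longrightarrow> a *v x = x"
      using that by (auto simp: U_grp_iff)
    have "matrix_inv a *v x = x" if "x $ lastI = 0" for x
      using a invertible_ASL_R[OF a(1)] that
      by (metis matrix_inv_left matrix_vector_mul_assoc matrix_vector_mul_lid)
    then show ?thesis using R(4)[OF a(1)] by (simp add: U_grp_iff)
  qed
qed

lemma ASL_R_normalizes_U_grp:
  assumes a: "a \<in> ASL_R" and u: "u \<in> U_grp"
  shows "matrix_inv a ** u ** a \<in> U_grp"
proof -
  note R = matrix_subgroupD[OF matrix_subgroup_ASL_R]
  have "(matrix_inv a ** u ** a) *v x = x" if "x $ lastI = 0" for x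
  proof -
    have "(a *v x) $ lastI = 0"
      using a that by (simp add: ASL_R_iff preserves_last_coord_def)
    then have "u *v (a *v x) = a *v x"
      using u by (simp add: U_grp_iff)
    then show ?thesis
      using invertible_ASL_R[OF a]
      by (metis matrix_inv_left matrix_vector_mul_assoc matrix_vector_mul_lid)
  qed
  moreover have "matrix_inv a ** u ** a \<in> ASL_R"
    using u R(2)[OF R(2)[OF R(4)[OF a]] a] by (simp add: U_grp_iff)
  ultimately show ?thesis by (simp add: U_grp_iff)
qed

abbreviation ASL_Z_U :: "'d::{finite,linorder} sq_matrix set" where
  "ASL_Z_U \<equiv> setmul ASL_Z U_grp"

lemma matrix_subgroup_ASL_Z_U: "matrix_subgroup ASL_Z_U"
  using matrix_subgroup_ASL_Z matrix_subgroup_U_grp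
  by (rule matrix_subgroup_setmul) (simp add: ASL_Z_iff ASL_R_normalizes_U_grp)

lemma ASL_Z_subset_ASL_Z_U: "ASL_Z \<subseteq> ASL_Z_U"
  unfolding setmul_def using matrix_subgroupD(1)[OF matrix_subgroup_U_grp]
  by (force intro: exI[of _ "mat 1"])

lemma ASL_Z_U_subset_ASL_R: "ASL_Z_U \<subseteq> ASL_R"
  unfolding setmul_def using matrix_subgroupD(2)[OF matrix_subgroup_ASL_R]
  by (auto simp: ASL_Z_iff U_grp_iff)

definition Zd_hyperplane :: "(real, 'd::{finite,linorder}) vec set" where
  "Zd_hyperplane = {z \<in> Zd. z $ lastI = 0}"

lemma ASL_Z_U_image_Zd_hyperplane:
  fixes h :: "'d::{finite,linorder} sq_matrix"
  assumes "h \<in> ASL_Z_U"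
  shows "(\<lambda>z. h *v z) ` Zd_hyperplane = Zd_hyperplane"
  using matrix_subgroup_ASL_Z_U assms
proof (rule image_eq_of_matrix_subgroup)
  fix k :: "'d sq_matrix" assume "k \<in> ASL_Z_U"
  then obtain a u where k: "k = a ** u" "a \<in> ASL_Z" "u \<in> U_grp"
    unfolding setmul_def by blast
  show "(\<lambda>z. k *v z) ` Zd_hyperplane \<subseteq> Zd_hyperplane"
  proof clarify
    fix z :: "(real, 'd) vec" assume "z \<in> Zd_hyperplane"
    then have "u *v z = z" "z \<in> Zd" "z $ lastI = 0"
      using k(3) by (auto simp: Zd_hyperplane_def U_grp_iff)
    then show "k *v z \<in> Zd_hyperplane"
      using k(2) by (simp add: k(1) Zd_hyperplane_def ASL_Z_iff ASL_R_iff int_mat_iff_Zd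
          preserves_last_coord_def flip: matrix_vector_mul_assoc)
  qed
qed

section \<open>Intersecting the lattice with the hyperplane\<close>

lemma sum_axis_hyperplane_component:
  "(\<Sum>i\<in>{i. i \<noteq> lastI}. c i *\<^sub>R axis i 1 :: (real, 'd::{finite,linorder}) vec) $ j
     = (if j = lastI then 0 else c j)"
  by (simp add: sum_component axis_def if_distrib cong: if_cong)

lemma hyperplane_eq_sum_axis:
  fixes x :: "(real, 'd::{finite,linorder}) vec"
  assumes "x $ lastI = 0"
  shows "x = (\<Sum>i\<in>{i. i \<noteq> lastI}. x $ i *\<^sub>R axis i 1)"
  using assms unfolding vec_eq_iff sum_axis_hyperplane_component by auto

lemma span_axis_hyperplane:
  "span {axis i 1 | i. i \<noteq> lastI} = {x :: (real, 'd::{finite,linorder}) vec. x $ lastI = 0}"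
proof
  have "subspace {x :: (real, 'd) vec. x $ lastI = 0}"
    unfolding subspace_def by simp
  moreover have "{axis i 1 | i. i \<noteq> lastI} \<subseteq> {x :: (real, 'd) vec. x $ lastI = 0}"
    by (auto simp: axis_def)
  ultimately show "span {axis i 1 | i. i \<noteq> lastI} \<subseteq> {x :: (real, 'd) vec. x $ lastI = 0}"
    by (rule span_minimal[rotated])
  show "{x :: (real, 'd) vec. x $ lastI = 0} \<subseteq> span {axis i 1 | i. i \<noteq> lastI}"
  proof
    fix x :: "(real, 'd) vec" assume "x \<in> {x. x $ lastI = 0}"
    then have x: "x = (\<Sum>i\<in>{i. i \<noteq> lastI}. x $ i *\<^sub>R axis i 1)"
      using hyperplane_eq_sum_axis by blast
    show "x \<in> span {axis i 1 | i. i \<noteq> lastI}"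
      by (subst x, intro span_sum span_scale span_base) blast
  qed
qed

lemma int_span_first_eq_image:
  fixes g :: "'d::{finite,linorder} sq_matrix"
  shows "int_span_first g = (\<lambda>z. g *v z) ` Zd_hyperplane"
proof -
  have g_sum: "g *v (\<Sum>i\<in>{i. i \<noteq> lastI}. c i *\<^sub>R axis i 1)
      = (\<Sum>i\<in>{i. i \<noteq> lastI}. c i *\<^sub>R (g *v axis i 1))" for c
    by (simp add: linear_sum[OF matrix_vector_mul_linear] linear_scale[OF matrix_vector_mul_linear])
  show ?thesis
  proof
    show "int_span_first g \<subseteq> (\<lambda>z. g *v z) ` Zd_hyperplane"
    proof
      fix x assume "x \<in> int_span_first g"
      then obtain c where c: "\<forall>i. c i \<in> \<int>" "x = (\<Sum>i\<in>{i. i \<noteq> lastI}. c i *\<^sub>R (g *v axis i 1))"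
        unfolding int_span_first_def by blast
      then have "x = g *v (\<Sum>i\<in>{i. i \<noteq> lastI}. c i *\<^sub>R axis i 1)"
        by (simp only: g_sum)
      moreover have "(\<Sum>i\<in>{i. i \<noteq> lastI}. c i *\<^sub>R axis i 1) \<in> Zd_hyperplane"
        unfolding Zd_hyperplane_def Zd_def mem_Collect_eq sum_axis_hyperplane_component
        using c(1) by auto
      ultimately show "x \<in> (\<lambda>z. g *v z) ` Zd_hyperplane"
        by blast
    qed
    show "(\<lambda>z. g *v z) ` Zd_hyperplane \<subseteq> int_span_first g"
    proof clarify
      fix z :: "(real, 'd) vec" assume z: "z \<in> Zd_hyperplane"
      then have "z = (\<Sum>i\<in>{i. i \<noteq> lastI}. z $ i *\<^sub>R axis i 1)"
        using hyperplane_eq_sum_axis unfolding Zd_hyperplane_def by blast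
      then have "g *v z = g *v (\<Sum>i\<in>{i. i \<noteq> lastI}. z $ i *\<^sub>R axis i 1)"
        by (rule arg_cong)
      also have "\<dots> = (\<Sum>i\<in>{i. i \<noteq> lastI}. z $ i *\<^sub>R (g *v axis i 1))"
        by (rule g_sum)
      finally have "g *v z = (\<Sum>i\<in>{i. i \<noteq> lastI}. z $ i *\<^sub>R (g *v axis i 1))" .
      moreover have "\<forall>i. z $ i \<in> \<int>"
        using z by (simp add: Zd_hyperplane_def Zd_def)
      ultimately show "g *v z \<in> int_span_first g"
        unfolding int_span_first_def by blast
    qed
  qed
qed

lemma pi_cap_Y_of:
  fixes g :: "'d::{finite,linorder} sq_matrix"
  assumes "invertible g"
  shows "pi_cap (Y_of g) = X_of g"
proof -
  have "{g *v axis i 1 | i. i \<noteq> lastI} = (\<lambda>x. g *v x) ` {axis i 1 | i. i \<noteq> lastI}"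
    by auto
  then have span: "span {g *v axis i 1 | i. i \<noteq> lastI} = (\<lambda>x. g *v x) ` {x. x $ lastI = 0}"
    by (simp add: span_linear_image[OF matrix_vector_mul_linear] span_axis_hyperplane)
  have "inj (\<lambda>x. g *v x)"
    using assms inj_matrix_vector_mult by blast
  then have "(\<lambda>z. g *v z) ` Zd \<inter> (\<lambda>x. g *v x) ` {x. x $ lastI = 0}
      = (\<lambda>z. g *v z) ` Zd_hyperplane"
    unfolding Zd_hyperplane_def by (simp add: image_Int Collect_conj_eq)
  then show ?thesis
    unfolding pi_cap_def Y_of_def X_of_def span int_span_first_eq_image by simp
qed

lemma transpose_ASL_R_fixes_ed:
  assumes "h \<in> ASL_R"
  shows "transpose h *v ed = ed"
proof -
  have "(transpose h *v axis lastI 1) $ i = axis lastI 1 $ i" for i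
    unfolding matrix_vector_mult_axis_component using assms
    by (simp add: ASL_R_def transpose_def axis_def)
  then show ?thesis
    unfolding ed_def vec_eq_iff by blast
qed

lemma tau_mult_ASL_R:
  fixes g :: "'d::{finite,linorder} sq_matrix"
  assumes g: "invertible g" and h: "h \<in> ASL_R"
  shows "tau (g ** h) = tau g"
proof -
  have "tau (g ** h) = transpose (matrix_inv g) *v (transpose (matrix_inv h) *v ed)"
    unfolding tau_def theta_def matrix_inv_mult[OF g invertible_ASL_R[OF h]] matrix_transpose_mul
    by (rule matrix_vector_mul_assoc[symmetric])
  also have "\<dots> = tau g"
    using transpose_ASL_R_fixes_ed[OF matrix_subgroupD(4)[OF matrix_subgroup_ASL_R h]]
    by (simp only: tau_def theta_def)
  finally show ?thesis .
qed

lemma X_of_mult_ASL_Z_U: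
  fixes g :: "'d::{finite,linorder} sq_matrix"
  assumes g: "invertible g" and h: "h \<in> ASL_Z_U"
  shows "X_of (g ** h) = X_of g"
proof -
  have "(\<lambda>z. (g ** h) *v z) ` Zd_hyperplane = (\<lambda>z. g *v z) ` ((\<lambda>z. h *v z) ` Zd_hyperplane)"
    by (simp add: image_image matrix_vector_mul_assoc)
  then have "int_span_first (g ** h) = int_span_first g"
    by (simp add: int_span_first_eq_image ASL_Z_U_image_Zd_hyperplane[OF h])
  moreover have "tau (g ** h) = tau g"
    using g h ASL_Z_U_subset_ASL_R by (blast intro: tau_mult_ASL_R)
  ultimately show ?thesis
    by (simp add: X_of_def)
qed

section \<open>Measurability on coset spaces\<close>

lemma space_quot_measure: "space (quot_measure G H) = quot G H"
  unfolding quot_measure_def by (rule space_measure_of) auto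

lemma sets_quot_measureI:
  assumes "A \<subseteq> quot G H" "\<Union>A \<in> sets borel"
  shows "A \<in> sets (quot_measure G H)"
  unfolding quot_measure_def using assms by (subst sets_measure_of) auto

lemma sets_m_Yd: "sets (m_Yd :: 'd::{finite,linorder} sq_matrix set measure) = sets (quot_measure ASL_R ASL_Z)"
proof (cases "\<exists>\<mu> :: 'd sq_matrix set measure. inv_prob_quot ASL_R ASL_Z \<mu>")
  case True
  then have "sets (SOME \<mu> :: 'd sq_matrix set measure. inv_prob_quot ASL_R ASL_Z \<mu>) = sets (quot_measure ASL_R ASL_Z)"
    by (rule someI2_ex) (simp add: inv_prob_quot_def)
  with True show ?thesis by (simp add: m_Yd_def)
qed (simp add: m_Yd_def)

lemma space_m_Yd: "space (m_Yd :: 'd::{finite,linorder} sq_matrix set measure) = quot ASL_R ASL_Z"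
  using sets_eq_imp_space_eq[OF sets_m_Yd] by (simp add: space_quot_measure)

lemma rep_mem: "x \<in> C \<Longrightarrow> rep C \<in> C"
  unfolding rep_def by (rule someI)

lemma continuous_on_det: "continuous_on UNIV (det :: 'd::finite sq_matrix \<Rightarrow> real)"
  unfolding det_def by (intro continuous_intros)

lemma closed_ASL_R: "closed (ASL_R :: 'd::{finite,linorder} sq_matrix set)"
proof -
  have "continuous_on UNIV (\<lambda>g :: 'd sq_matrix. g $ lastI $ j)" for j
    by (intro continuous_intros)
  then have rows: "closed {g :: 'd sq_matrix. g $ lastI $ j = (if j = lastI then 1 else 0)}" for j
    using closed_Collect_eq continuous_on_const by blast
  have det: "closed {g :: 'd sq_matrix. det g = 1}"
    by (rule closed_Collect_eq[OF continuous_on_det continuous_on_const])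
  have "closed ({g :: 'd sq_matrix. det g = 1} \<inter>
      (\<Inter>j. {g. g $ lastI $ j = (if j = lastI then 1 else 0)}))"
    using det rows by (intro closed_Int closed_INT) auto
  moreover have "ASL_R = {g :: 'd sq_matrix. det g = 1} \<inter>
      (\<Inter>j. {g. g $ lastI $ j = (if j = lastI then 1 else 0)})"
    unfolding ASL_R_def by blast
  ultimately show ?thesis
    by simp
qed

lemma Union_preimage_setmul_quot:
  fixes G K N :: "'d::finite sq_matrix set"
  assumes G: "matrix_subgroup G" and KN: "matrix_subgroup (setmul K N)" "setmul K N \<subseteq> G"
    and unit: "mat 1 \<in> K" "mat 1 \<in> N" and A: "A \<subseteq> quot G (setmul K N)"
  shows "\<Union>((\<lambda>C. setmul C N) -` A \<inter> quot G K) = \<Union>A"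
proof
  have "lmul x K \<subseteq> lmul x (setmul K N)" for x
    unfolding lmul_def setmul_def using unit(2) by (force intro: exI[of _ "mat 1"])
  then show "\<Union>((\<lambda>C. setmul C N) -` A \<inter> quot G K) \<subseteq> \<Union>A"
    unfolding quot_def by (force simp: setmul_lmul)
  show "\<Union>A \<subseteq> \<Union>((\<lambda>C. setmul C N) -` A \<inter> quot G K)"
  proof
    fix y assume "y \<in> \<Union>A"
    then obtain x h where x: "x \<in> G" "lmul x (setmul K N) \<in> A" and h: "h \<in> setmul K N" "y = x ** h"
      using A unfolding quot_def lmul_def by blast
    then have "y \<in> G"
      using G KN(2) matrix_subgroupD(2) by blast
    moreover have "lmul y (setmul K N) = lmul x (setmul K N)"
      by (simp add: h(2) lmul_mult lmul_matrix_subgroup[OF KN(1) h(1)])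
    ultimately have "lmul y K \<in> (\<lambda>C. setmul C N) -` A \<inter> quot G K"
      using x(2) unfolding quot_def by (auto simp: setmul_lmul)
    then show "y \<in> \<Union>((\<lambda>C. setmul C N) -` A \<inter> quot G K)"
      using mem_lmul_self[OF unit(1)] by blast
  qed
qed

lemma measurable_setmul_quot:
  fixes G K N :: "'d::finite sq_matrix set"
  assumes G: "matrix_subgroup G" and KN: "matrix_subgroup (setmul K N)" "setmul K N \<subseteq> G"
    and unit: "mat 1 \<in> K" "mat 1 \<in> N"
  shows "(\<lambda>C. setmul C N) \<in> quot_measure G K \<rightarrow>\<^sub>M quot_measure G (setmul K N)"
  unfolding quot_measure_def[of G "setmul K N"]
proof (rule measurable_measure_of)
  show "(\<lambda>C. setmul C N) \<in> space (quot_measure G K) \<rightarrow> quot G (setmul K N)"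
    unfolding space_quot_measure quot_def by (auto simp: setmul_lmul)
  fix A assume "A \<in> {A. A \<subseteq> quot G (setmul K N) \<and> \<Union>A \<in> sets borel}"
  then show "(\<lambda>C. setmul C N) -` A \<inter> space (quot_measure G K) \<in> sets (quot_measure G K)"
    unfolding space_quot_measure
    by (intro sets_quot_measureI) (auto simp: Union_preimage_setmul_quot[OF assms])
qed auto

lemma Union_preimage_rep_quot:
  fixes G H :: "'d::finite sq_matrix set"
  assumes G: "matrix_subgroup G" and H: "H \<subseteq> G" "mat 1 \<in> H"
    and invariant: "\<And>x h. x \<in> G \<Longrightarrow> h \<in> H \<Longrightarrow> \<phi> (x ** h) = \<phi> x"
  shows "\<Union>((\<lambda>C. \<phi> (rep C)) -` B \<inter> quot G H) = {y \<in> G. \<phi> y \<in> B}"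
proof
  have coset: "y \<in> G \<and> \<phi> y = \<phi> x" if x: "x \<in> G" and y: "y \<in> lmul x H" for x y
  proof -
    obtain h where "h \<in> H" "y = x ** h"
      using y unfolding lmul_def by blast
    then show ?thesis
      using x invariant H(1) matrix_subgroupD(2)[OF G] by auto
  qed
  show "\<Union>((\<lambda>C. \<phi> (rep C)) -` B \<inter> quot G H) \<subseteq> {y \<in> G. \<phi> y \<in> B}"
  proof
    fix y assume "y \<in> \<Union>((\<lambda>C. \<phi> (rep C)) -` B \<inter> quot G H)"
    then obtain x where x: "x \<in> G" "y \<in> lmul x H" "\<phi> (rep (lmul x H)) \<in> B"
      unfolding quot_def by auto
    moreover have "rep (lmul x H) \<in> lmul x H"
      using rep_mem[OF x(2)] .
    ultimately show "y \<in> {y \<in> G. \<phi> y \<in> B}"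
      using coset by fastforce
  qed
  show "{y \<in> G. \<phi> y \<in> B} \<subseteq> \<Union>((\<lambda>C. \<phi> (rep C)) -` B \<inter> quot G H)"
  proof
    fix y assume y: "y \<in> {y \<in> G. \<phi> y \<in> B}"
    then have "\<phi> (rep (lmul y H)) = \<phi> y"
      using coset rep_mem[OF mem_lmul_self[OF H(2)]] by blast
    then have "lmul y H \<in> (\<lambda>C. \<phi> (rep C)) -` B \<inter> quot G H"
      using y unfolding quot_def by auto
    then show "y \<in> \<Union>((\<lambda>C. \<phi> (rep C)) -` B \<inter> quot G H)"
      using mem_lmul_self[OF H(2)] by blast
  qed
qed

lemma measurable_rep_quot:
  fixes G H :: "'d::finite sq_matrix set" and \<phi> :: "'d sq_matrix \<Rightarrow> 'b::topological_space"
  assumes G: "matrix_subgroup G" "G \<in> sets borel" and H: "H \<subseteq> G" "mat 1 \<in> H"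
    and \<phi>: "\<phi> \<in> borel_measurable (restrict_space borel G)"
    and invariant: "\<And>x h. x \<in> G \<Longrightarrow> h \<in> H \<Longrightarrow> \<phi> (x ** h) = \<phi> x"
  shows "(\<lambda>C. \<phi> (rep C)) \<in> borel_measurable (quot_measure G H)"
proof (rule measurableI)
  fix B :: "'b set" assume B: "B \<in> sets borel"
  have "\<phi> -` B \<inter> space (restrict_space borel G) \<in> sets (restrict_space borel G)"
    by (rule measurable_sets[OF \<phi> B])
  moreover have "\<phi> -` B \<inter> space (restrict_space borel G) = {y \<in> G. \<phi> y \<in> B}"
    by (auto simp: space_restrict_space)
  ultimately have "{y \<in> G. \<phi> y \<in> B} \<in> sets borel"
    using G(2) sets_restrict_space_iff[of G borel] by simp
  then show "(\<lambda>C. \<phi> (rep C)) -` B \<inter> space (quot_measure G H) \<in> sets (quot_measure G H)"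
    unfolding space_quot_measure
    by (intro sets_quot_measureI) (auto simp: Union_preimage_rep_quot[OF G(1) H invariant])
qed auto

section \<open>The projection \<open>pi_cap\<close> and the measures\<close>

lemma det_gv: "det (gv v) = 1"
proof (cases "\<exists>g. det g = 1 \<and> tau g = v")
  case True
  then show ?thesis
    unfolding gv_def if_P[OF True] by (rule someI2_ex) auto
next
  case False
  then show ?thesis
    unfolding gv_def if_not_P[OF False] by simp
qed

lemma continuous_on_matrix_mult_left: "continuous_on UNIV (\<lambda>B. (A :: 'd::finite sq_matrix) ** B)"
  unfolding matrix_matrix_mult_def by (intro continuous_intros)

lemma measurable_left_mult_ASL_R:
  fixes G :: "'d::{finite,linorder} sq_matrix"
  assumes \<phi>: "\<phi> \<in> borel_measurable (restrict_space borel SLd)" and G: "det G = 1"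
  shows "(\<lambda>y. \<phi> (G ** y)) \<in> borel_measurable (restrict_space borel ASL_R)"
proof -
  have "(\<lambda>y. G ** y) \<in> restrict_space borel ASL_R \<rightarrow>\<^sub>M restrict_space borel SLd"
    using G by (intro measurable_restrict_space3 borel_measurable_continuous_onI
        continuous_on_matrix_mult_left) (auto simp: ASL_R_iff SLd_def det_mul)
  from measurable_comp[OF this \<phi>] show ?thesis
    by (simp add: comp_def)
qed

lemma pi_cap_Y_of_rep_eq_X_of_rep_setmul:
  fixes G :: "'d::{finite,linorder} sq_matrix"
  assumes G: "invertible G" and C: "C \<in> quot ASL_R ASL_Z"
  shows "pi_cap (Y_of (G ** rep C)) = X_of (G ** rep (setmul C U_grp))"
proof -
  obtain x where x: "x \<in> ASL_R" "C = lmul x ASL_Z"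
    using C unfolding quot_def by blast
  have Gx: "invertible (G ** x)"
    using G invertible_ASL_R[OF x(1)] invertible_mult by blast
  have coset: "X_of (G ** y) = X_of (G ** x)" if y: "y \<in> lmul x ASL_Z_U" for y
  proof -
    obtain h where "h \<in> ASL_Z_U" "y = x ** h"
      using y unfolding lmul_def by blast
    then show ?thesis
      using X_of_mult_ASL_Z_U[OF Gx] by (simp add: matrix_mul_assoc)
  qed
  obtain a where a: "a \<in> ASL_Z" "rep C = x ** a"
    using rep_mem[OF mem_lmul_self[OF matrix_subgroupD(1)[OF matrix_subgroup_ASL_Z]]] x(2)
    unfolding lmul_def by blast
  then have "rep C \<in> lmul x ASL_Z_U"
    using ASL_Z_subset_ASL_Z_U unfolding lmul_def by blast
  moreover have "rep (setmul C U_grp) \<in> lmul x ASL_Z_U"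
    using rep_mem[OF mem_lmul_self[OF matrix_subgroupD(1)[OF matrix_subgroup_ASL_Z_U]]]
    by (simp add: x(2) setmul_lmul)
  moreover have "invertible (G ** rep C)"
    using Gx a invertible_ASL_R[of a] invertible_mult
    by (simp add: ASL_Z_iff matrix_mul_assoc)
  ultimately show ?thesis
    using coset by (simp add: pi_cap_Y_of)
qed

lemma measurable_setmul_U_grp:
  "(\<lambda>C. setmul C U_grp) \<in> m_Yd \<rightarrow>\<^sub>M quot_measure ASL_R (ASL_Z_U :: 'd::{finite,linorder} sq_matrix set)"
  using measurable_setmul_quot[OF matrix_subgroup_ASL_R matrix_subgroup_ASL_Z_U ASL_Z_U_subset_ASL_R
      matrix_subgroupD(1)[OF matrix_subgroup_ASL_Z] matrix_subgroupD(1)[OF matrix_subgroup_U_grp]]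
  by (simp add: measurable_cong_sets[OF sets_m_Yd refl])

lemma measurable_X_of_rep_quot:
  fixes G :: "'d::{finite,linorder} sq_matrix"
  assumes f: "(\<lambda>g. f (X_of g)) \<in> borel_measurable (restrict_space borel SLd)" and G: "det G = 1"
  shows "(\<lambda>C. f (X_of (G ** rep C))) \<in> borel_measurable (quot_measure ASL_R ASL_Z_U)"
  using matrix_subgroup_ASL_R borel_closed[OF closed_ASL_R] ASL_Z_U_subset_ASL_R
    matrix_subgroupD(1)[OF matrix_subgroup_ASL_Z_U] measurable_left_mult_ASL_R[OF f G]
proof (rule measurable_rep_quot)
  fix x h :: "'d sq_matrix" assume "x \<in> ASL_R" "h \<in> ASL_Z_U"
  moreover have "invertible (G ** x)"
    using G \<open>x \<in> ASL_R\<close> by (simp add: invertible_det_nz det_mul ASL_R_iff)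
  ultimately have "X_of ((G ** x) ** h) = X_of (G ** x)"
    using X_of_mult_ASL_Z_U by blast
  then show "f (X_of (G ** (x ** h))) = f (X_of (G ** x))"
    by (simp add: matrix_mul_assoc)
qed

lemma nn_integral_m_Xd_eq_nn_integral_m_Yd_pi_cap:
  fixes G :: "'d::{finite,linorder} sq_matrix"
  assumes f: "(\<lambda>g. f (X_of g)) \<in> borel_measurable (restrict_space borel SLd)" and G: "det G = 1"
  shows "(\<integral>\<^sup>+C. f (X_of (G ** rep C)) \<partial>m_Xd) = (\<integral>\<^sup>+C. f (pi_cap (Y_of (G ** rep C))) \<partial>m_Yd)"
proof -
  have "(\<integral>\<^sup>+C. f (X_of (G ** rep C)) \<partial>m_Xd) = (\<integral>\<^sup>+C. f (X_of (G ** rep (setmul C U_grp))) \<partial>m_Yd)"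
    unfolding m_Xd_def
    by (simp add: nn_integral_distr measurable_setmul_U_grp measurable_X_of_rep_quot[OF f G])
  also have "\<dots> = (\<integral>\<^sup>+C. f (pi_cap (Y_of (G ** rep C))) \<partial>m_Yd)"
    using G by (intro nn_integral_cong)
      (simp add: space_m_Yd invertible_det_nz pi_cap_Y_of_rep_eq_X_of_rep_setmul)
  finally show ?thesis .
qed

theorem lemma4p6:
  fixes M :: "((real, 'd::{finite,linorder}) vec, 'd) vec"
  assumes "CARD('d) \<ge> 4"
    and "int_mat M" and "transpose M = M" and "det M \<noteq> 0"
    and "QF M ed > 0"
    and "compact {h \<in> SO_R M. h *v ed = ed}"
  shows "\<forall>f :: ((real, 'd) vec) set \<times> (real, 'd) vec \<Rightarrow> ennreal.
           (\<lambda>g. f (X_of g)) \<in> borel_measurable (restrict_space borel SLd) \<longrightarrow>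
           mu_Y M (\<lambda>y. f (pi_cap y)) = mu_X M f"
proof (intro allI impI)
  fix f :: "((real, 'd) vec) set \<times> (real, 'd) vec \<Rightarrow> ennreal"
  assume "(\<lambda>g. f (X_of g)) \<in> borel_measurable (restrict_space borel SLd)"
  then have "(\<integral>\<^sup>+C. f (X_of (gv v ** rep C)) \<partial>m_Xd) = (\<integral>\<^sup>+C. f (pi_cap (Y_of (gv v ** rep C))) \<partial>m_Yd)"
    for v :: "(real, 'd) vec"
    using det_gv by (rule nn_integral_m_Xd_eq_nn_integral_m_Yd_pi_cap)
  then show "mu_Y M (\<lambda>y. f (pi_cap y)) = mu_X M f"
    by (simp add: mu_Y_def mu_X_def)
qed

end
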